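(* Let $(P_X,P_{Y|X})$ be an input/channel pair satisfying (A3). Then there exist a contraction $\xi$ and a length function $\psi_\lambda$ (of the form below) such that for every $h\in\mathfrak F_c$, $$\mathbb E\Big(\psi_\lambda\big[F_{\Theta|\Phi}(\cdot\,|\,\Phi)\circ h\big]\Big)\le\xi\big(\psi_\lambda(h)\big),\qquad \Phi\sim\mathcal U.$$
   Context: $\mathcal U$ is uniform on $(0,1)$. Normalized channel of an input/channel pair $(P_X,P_{Y|X})$ (memoryless channel, input distribution in its input alphabet, $I(X;Y)<\infty$): $\Theta\sim\mathcal U$; given $\Theta=\theta$, $Y\sim P_{Y|X}(\cdot|F_X^{-1}(\theta))$ with $F_X^{-1}(t)=\inf\{x:F_X(x)>t\}$; $\Lambda\sim\mathcal U$ independent; $\Phi=F_Y(Y)-P_Y(\{Y\})\Lambda$; $F_{\Theta|\Phi}(\cdot|\phi)$ is the conditional c.d.f. of $\Theta$ given $\Phi=\phi$. (A3): for every $\theta\in(0,1)$, $\Pr(F_{\Theta|\Phi}(\theta|\Phi)=\theta)<1$. $\mathfrak F_c$ is the set of nondecreasing functions $h:(0,1)\to(0,1)$ whose range has convex hull $(0,1)$. For $\lambda:[0,1]\to[0,1]$ surjective, concave and symmetric about $\frac12$, the length function is $\psi_\lambda(h)=\int_0^1\lambda(h(x))dx$. A contraction is a nonnegative concave $\xi:[0,1]\to[0,1]$ with $\xi(x)<x$ for all $x\in(0,1]$. *)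

theory Defs
  imports "HOL-Probability.Probability"
begin

definition unif01 :: "real measure" where
  "unif01 = uniform_measure lborel {0<..<1}"

definition input_channel_pair :: "real measure \<Rightarrow> (real \<Rightarrow> real measure) \<Rightarrow> bool" where
  "input_channel_pair PX W \<longleftrightarrow> prob_space PX \<and> sets PX = sets borel \<and>
      W \<in> measurable borel (prob_algebra borel)"

text \<open>Joint law of (X,Y), output law, and finiteness of the mutual information
  I(X;Y) = D(P_XY || P_X x P_Y).\<close>
definition joint_XY :: "real measure \<Rightarrow> (real \<Rightarrow> real measure) \<Rightarrow> (real \<times> real) measure" where
  "joint_XY PX W = PX \<bind> (\<lambda>x. W x \<bind> (\<lambda>y. return (borel \<Otimes>\<^sub>M borel) (x, y)))"

definition output_law :: "real measure \<Rightarrow> (real \<Rightarrow> real measure) \<Rightarrow> real measure" where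
  "output_law PX W = PX \<bind> W"

definition finite_mutual_info :: "real measure \<Rightarrow> (real \<Rightarrow> real measure) \<Rightarrow> bool" where
  "finite_mutual_info PX W \<longleftrightarrow>
     (let J = joint_XY PX W; Q = PX \<Otimes>\<^sub>M output_law PX W in
        absolutely_continuous Q J \<and> integrable J (\<lambda>z. ln (enn2real (RN_deriv Q J z))))"

definition cdf_of :: "real measure \<Rightarrow> real \<Rightarrow> real" where
  "cdf_of P x = measure P {..x}"

definition gen_inv :: "(real \<Rightarrow> real) \<Rightarrow> real \<Rightarrow> real" where
  "gen_inv F t = Inf {x. F x > t}"

text \<open>Joint law of (Theta, Phi) of the normalized channel:
  Theta ~ U, Y ~ W(F_X^{-1}(Theta)), Lambda ~ U independent,
  Phi = F_Y(Y) - P_Y({Y}) Lambda.\<close>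
definition theta_phi_law :: "real measure \<Rightarrow> (real \<Rightarrow> real measure) \<Rightarrow> (real \<times> real) measure" where
  "theta_phi_law PX W =
     (let PY = output_law PX W; FX = cdf_of PX; FY = cdf_of PY in
      unif01 \<bind> (\<lambda>\<theta>. W (gen_inv FX \<theta>) \<bind> (\<lambda>y. unif01 \<bind> (\<lambda>l.
         return (borel \<Otimes>\<^sub>M borel) (\<theta>, FY y - measure PY {y} * l)))))"

definition phi_law :: "real measure \<Rightarrow> (real \<Rightarrow> real measure) \<Rightarrow> real measure" where
  "phi_law PX W = distr (theta_phi_law PX W) borel snd"

text \<open>K is a version of the conditional c.d.f. F_{Theta|Phi}(theta|phi) = K phi theta:
  for each phi a c.d.f. in theta, measurable in phi for each theta, and
  integrating to the joint law.\<close>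
definition is_cond_cdf :: "real measure \<Rightarrow> (real \<Rightarrow> real measure) \<Rightarrow> (real \<Rightarrow> real \<Rightarrow> real) \<Rightarrow> bool" where
  "is_cond_cdf PX W K \<longleftrightarrow>
     (\<forall>\<phi>. mono (K \<phi>) \<and> (\<forall>t. continuous (at_right t) (K \<phi>)) \<and>
           (K \<phi> \<longlongrightarrow> 0) at_bot \<and> (K \<phi> \<longlongrightarrow> 1) at_top) \<and>
     (\<forall>\<theta>. (\<lambda>\<phi>. K \<phi> \<theta>) \<in> borel_measurable borel) \<and>
     (\<forall>\<theta>. \<forall>B \<in> sets borel.
        measure (theta_phi_law PX W) {z. fst z \<le> \<theta> \<and> snd z \<in> B}
          = (\<integral>\<phi>\<in>B. K \<phi> \<theta> \<partial>phi_law PX W))"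

definition condA3 :: "real measure \<Rightarrow> (real \<Rightarrow> real measure) \<Rightarrow> (real \<Rightarrow> real \<Rightarrow> real) \<Rightarrow> bool" where
  "condA3 PX W K \<longleftrightarrow> (\<forall>\<theta>\<in>{0<..<1}. measure (phi_law PX W) {\<phi>. K \<phi> \<theta> = \<theta>} < 1)"

definition Fc :: "(real \<Rightarrow> real) set" where
  "Fc = {h. mono_on {0<..<1} h \<and> h ` {0<..<1} \<subseteq> {0<..<1} \<and>
            convex hull (h ` {0<..<1}) = {0<..<1}}"

definition admissible_lambda :: "(real \<Rightarrow> real) \<Rightarrow> bool" where
  "admissible_lambda lam \<longleftrightarrow> lam ` {0..1} = {0..1} \<and> concave_on {0..1} lam \<and>
      (\<forall>x\<in>{0..1}. lam (1 - x) = lam x)"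

definition psi :: "(real \<Rightarrow> real) \<Rightarrow> (real \<Rightarrow> real) \<Rightarrow> real" where
  "psi lam h = (\<integral>x\<in>{0<..<1}. lam (h x) \<partial>lborel)"

definition contraction :: "(real \<Rightarrow> real) \<Rightarrow> bool" where
  "contraction \<xi> \<longleftrightarrow> (\<forall>x\<in>{0..1}. 0 \<le> \<xi> x \<and> \<xi> x \<le> 1) \<and> concave_on {0..1} \<xi> \<and>
      (\<forall>x\<in>{0<..1}. \<xi> x < x)"

end

theory Submission
  imports Defs
begin

(*
  Take the quadratic length function lam_quad y = 4y(1-y) and write
  K phi theta for the conditional c.d.f. F_{Theta|Phi}(theta|phi).  Since Theta is uniform,
  E K(Phi,theta) = theta for every theta in (0,1), and the identity
  lam_quad z = lam_quad theta + 4(1-2 theta)(z-theta) - 4(z-theta)^2 gives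
      E lam_quad (K(Phi,theta)) <= lam_quad theta - 4 D(theta)^2,
  where D(theta) = E |K(Phi,theta) - theta|.  Condition (A3) makes D positive on (0,1), and
  D is 2-Lipschitz, so on every compact level set {lam_quad >= s} (s > 0) we have
  D^2 >= c(s) > 0.  Integrating along h and comparing the mass of the level set with
  t = psi(h) yields E psi(K o h) <= t - 4 sup_s c(s) max 0 (t - s), and the right-hand side
  is a contraction because a supremum of convex functions of t is convex.
*)


lemma cdf_of_eq_cdf: "cdf_of = cdf"
  by (simp add: fun_eq_iff cdf_of_def cdf_def)

lemma real_distribution_if_prob_algebra:
  "P \<in> space (prob_algebra borel) \<Longrightarrow> real_distribution P"
  by (auto simp: space_prob_algebra real_distribution_def real_distribution_axioms_def)

lemma mono_limits_bounds:
  fixes F :: "real \<Rightarrow> real"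
  assumes "mono F" "(F \<longlongrightarrow> 0) at_bot" "(F \<longlongrightarrow> 1) at_top"
  shows "0 \<le> F t" "F t \<le> 1"
proof -
  show "0 \<le> F t"
    by (rule tendsto_upperbound[OF assms(2)])
       (use assms(1) in \<open>auto simp: eventually_at_bot_linorder mono_def\<close>)
  show "F t \<le> 1"
    by (rule tendsto_lowerbound[OF assms(3)])
       (use assms(1) in \<open>auto simp: eventually_at_top_linorder mono_def\<close>)
qed

lemma (in real_distribution) gen_inv_cdf_mono: "mono_on {0<..<1} (gen_inv (cdf M))"
proof (rule mono_onI)
  fix r s :: real assume r: "r \<in> {0<..<1}" and s: "s \<in> {0<..<1}" and rs: "r \<le> s"
  have "eventually (\<lambda>x. cdf M x > s) at_top"
    using cdf_lim_at_top_prob s by (auto simp: order_tendsto_iff)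
  then have nonempty: "{x. cdf M x > s} \<noteq> {}"
    by (auto simp: eventually_at_top_linorder)
  have "eventually (\<lambda>x. cdf M x < r) at_bot"
    using cdf_lim_at_bot r by (auto simp: order_tendsto_iff)
  then obtain b where "\<And>x. x \<le> b \<Longrightarrow> cdf M x < r"
    by (auto simp: eventually_at_bot_linorder)
  then have "bdd_below {x. cdf M x > r}"
    by (intro bdd_belowI[of _ b]) (metis less_asym mem_Collect_eq nle_le)
  moreover have "{x. cdf M x > s} \<subseteq> {x. cdf M x > r}"
    using rs by auto
  ultimately show "gen_inv (cdf M) r \<le> gen_inv (cdf M) s"
    unfolding gen_inv_def by (rule cInf_superset_mono[OF nonempty])
qed

(* Outside (0,1) the quantile function is constant, hence it is Borel measurable. *)
lemma (in real_distribution) gen_inv_cdf_measurable: "gen_inv (cdf M) \<in> borel_measurable borel"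
proof (rule borel_measurable_piecewise_mono[of "{{..<0}, {0}, {0<..<1}, {1..}}"])
  have below: "{x. cdf M x > t} = UNIV" if "t < 0" for t
    using cdf_nonneg that by (auto intro: less_le_trans)
  have above: "{x. cdf M x > t} = {}" if "1 \<le> t" for t
    using cdf_bounded_prob that by (auto simp: not_less intro: order_trans)
  fix c assume "c \<in> {{..<0}, {0}, {0<..<1}, {(1::real)..}}"
  then show "mono_on c (gen_inv (cdf M))"
    using gen_inv_cdf_mono by (auto simp: mono_on_def gen_inv_def below above)
qed auto

(* The atom y \<mapsto> P{y} is measurable: it is the section measure of the diagonal. *)
lemma (in real_distribution) atom_measurable: "(\<lambda>y. measure M {y}) \<in> borel_measurable borel"
proof -
  have "{z \<in> space (borel \<Otimes>\<^sub>M borel). fst z = snd z} \<in> sets (borel \<Otimes>\<^sub>M (borel :: real measure))"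
    by measurable
  then have diagonal: "{z. fst z = snd z} \<in> sets (borel \<Otimes>\<^sub>M M)"
    by (simp add: space_pair_measure cong: sets_pair_measure_cong)
  have "(\<lambda>y. emeasure M (Pair y -` {z. fst z = snd z})) \<in> borel_measurable borel"
    by (rule measurable_emeasure_Pair[OF diagonal])
  then show ?thesis
    by (simp add: measure_def vimage_def)
qed


(* The normalized channel *)

lemma emeasure_bind_prob_const:
  assumes "P \<in> space (prob_algebra N)" "f \<in> N \<rightarrow>\<^sub>M prob_algebra S" "X \<in> sets S"
    and "\<And>y. y \<in> space N \<Longrightarrow> emeasure (f y) X = c"
  shows "emeasure (P \<bind> f) X = c"
proof -
  have "emeasure (P \<bind> f) X = (\<integral>\<^sup>+y. emeasure (f y) X \<partial>P)"
    by (rule emeasure_bind_prob_algebra[OF assms(1-3)])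
  also have "\<dots> = (\<integral>\<^sup>+y. c \<partial>P)"
    using assms(1,4) by (intro nn_integral_cong) (auto simp: space_prob_algebra dest: sets_eq_imp_space_eq)
  also have "\<dots> = c"
    using assms(1) by (simp add: space_prob_algebra prob_space.emeasure_space_1)
  finally show ?thesis .
qed

lemma unif01_prob_algebra: "unif01 \<in> space (prob_algebra borel)"
  unfolding unif01_def space_prob_algebra by (auto intro!: prob_space_uniform_measure)

lemma fst_le_sets:
  fixes a :: real
  shows "{z. fst z \<le> a} \<in> sets (borel \<Otimes>\<^sub>M (borel :: real measure))"
proof -
  have "{z \<in> space (borel \<Otimes>\<^sub>M borel). fst z \<le> a} \<in> sets (borel \<Otimes>\<^sub>M (borel :: real measure))"
    by measurable
  then show ?thesis
    by (simp add: space_pair_measure)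
qed

lemma input_channel_pair_laws:
  assumes "input_channel_pair PX W"
  shows "PX \<in> space (prob_algebra borel)" "W \<in> borel \<rightarrow>\<^sub>M prob_algebra borel"
    "output_law PX W \<in> space (prob_algebra borel)"
proof -
  show PX: "PX \<in> space (prob_algebra borel)" and W: "W \<in> borel \<rightarrow>\<^sub>M prob_algebra borel"
    using assms by (auto simp: input_channel_pair_def space_prob_algebra)
  show "output_law PX W \<in> space (prob_algebra borel)"
    unfolding output_law_def space_prob_algebra
    using prob_space_bind'[OF PX W] sets_bind'[OF PX W] by auto
qed

lemma theta_phi_law_kernel:
  assumes "input_channel_pair PX W"
  obtains N where "N \<in> borel \<rightarrow>\<^sub>M prob_algebra (borel \<Otimes>\<^sub>M borel)"
    and "theta_phi_law PX W = unif01 \<bind> N"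
    and "\<And>\<theta> a. emeasure (N \<theta>) {z. fst z \<le> a} = indicator {..a} \<theta>"
proof -
  note laws = input_channel_pair_laws[OF assms]
  define PY where "PY = output_law PX W"
  interpret X: real_distribution PX
    using laws(1) by (rule real_distribution_if_prob_algebra)
  interpret Y: real_distribution PY
    using laws(3) unfolding PY_def by (rule real_distribution_if_prob_algebra)
  note U = unif01_prob_algebra
  note [measurable] = laws(2) X.gen_inv_cdf_measurable Y.atom_measurable
  have [measurable]: "cdf PY \<in> borel_measurable borel"
    by (intro borel_measurable_mono) (simp add: mono_def Y.cdf_nondecreasing)
  define R where "R \<theta> y l = return (borel \<Otimes>\<^sub>M borel) (\<theta>, cdf PY y - measure PY {y} * l)"
    for \<theta> y l :: real
  define N where "N \<theta> = W (gen_inv (cdf PX) \<theta>) \<bind> (\<lambda>y. unif01 \<bind> R \<theta> y)" for \<theta>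
  have "(\<lambda>(x, l). R (fst x) (snd x) l) \<in> (borel \<Otimes>\<^sub>M borel) \<Otimes>\<^sub>M borel \<rightarrow>\<^sub>M prob_algebra (borel \<Otimes>\<^sub>M borel)"
    unfolding R_def by measurable
  from measurable_bind_prob_space2[OF measurable_const[OF U] this]
  have inner: "(\<lambda>(\<theta>, y). unif01 \<bind> R \<theta> y) \<in> borel \<Otimes>\<^sub>M borel \<rightarrow>\<^sub>M prob_algebra (borel \<Otimes>\<^sub>M borel)"
    by (simp add: case_prod_beta')
  have N: "N \<in> borel \<rightarrow>\<^sub>M prob_algebra (borel \<Otimes>\<^sub>M borel)"
    unfolding N_def by (rule measurable_bind_prob_space2[OF _ inner]) measurable
  note Xa = fst_le_sets
  have first: "emeasure (N \<theta>) {z. fst z \<le> a} = indicator {..a} \<theta>" for \<theta> a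
    unfolding N_def
  proof (rule emeasure_bind_prob_const[OF _ _ Xa])
    show "W (gen_inv (cdf PX) \<theta>) \<in> space (prob_algebra borel)"
      by (rule measurable_space[OF laws(2)]) simp
    show "(\<lambda>y. unif01 \<bind> R \<theta> y) \<in> borel \<rightarrow>\<^sub>M prob_algebra (borel \<Otimes>\<^sub>M borel)"
      using measurable_Pair2[OF inner] by simp
    fix y
    have "R \<theta> y \<in> borel \<rightarrow>\<^sub>M prob_algebra (borel \<Otimes>\<^sub>M borel)"
      unfolding R_def by measurable
    moreover have "emeasure (R \<theta> y l) {z. fst z \<le> a} = indicator {..a} \<theta>" for l
      unfolding R_def using Xa by (simp add: indicator_def)
    ultimately show "emeasure (unif01 \<bind> R \<theta> y) {z. fst z \<le> a} = indicator {..a} \<theta>"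
      by (intro emeasure_bind_prob_const[OF U _ Xa])
  qed
  have "theta_phi_law PX W = unif01 \<bind> N"
    by (simp add: theta_phi_law_def Let_def N_def[abs_def] R_def[abs_def] PY_def cdf_of_eq_cdf)
  from that[OF N this first] show ?thesis .
qed

lemma phi_law_distribution:
  assumes "input_channel_pair PX W"
  shows "prob_space (phi_law PX W)" "sets (phi_law PX W) = sets borel"
proof -
  obtain N where N: "N \<in> borel \<rightarrow>\<^sub>M prob_algebra (borel \<Otimes>\<^sub>M borel)"
    and law: "theta_phi_law PX W = unif01 \<bind> N"
    by (rule theta_phi_law_kernel[OF assms]) blast
  note U = unif01_prob_algebra
  have "prob_space (theta_phi_law PX W)"
    unfolding law by (rule prob_space_bind'[OF U N])
  moreover have "sets (theta_phi_law PX W) = sets (borel \<Otimes>\<^sub>M borel)"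
    unfolding law by (rule sets_bind'[OF U N])
  ultimately show "prob_space (phi_law PX W)"
    unfolding phi_law_def by (intro prob_space.prob_space_distr) (simp_all cong: measurable_cong_sets)
  show "sets (phi_law PX W) = sets borel"
    by (simp add: phi_law_def)
qed

lemma theta_marginal_uniform:
  assumes "input_channel_pair PX W" "\<theta> \<in> {0<..<1}"
  shows "measure (theta_phi_law PX W) {z. fst z \<le> \<theta>} = \<theta>"
proof -
  obtain N where N: "N \<in> borel \<rightarrow>\<^sub>M prob_algebra (borel \<Otimes>\<^sub>M borel)"
    and law: "theta_phi_law PX W = unif01 \<bind> N"
    and first: "\<And>t a. emeasure (N t) {z. fst z \<le> a} = indicator {..a} t"
    by (rule theta_phi_law_kernel[OF assms(1)]) blast
  note U = unif01_prob_algebra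
  have "emeasure (theta_phi_law PX W) {z. fst z \<le> \<theta>} = (\<integral>\<^sup>+t. indicator {..\<theta>} t \<partial>unif01)"
    unfolding law by (simp add: emeasure_bind_prob_algebra[OF U N fst_le_sets] first)
  also have "\<dots> = emeasure unif01 {..\<theta>}"
    using U by (simp add: space_prob_algebra)
  also have "\<dots> = ennreal \<theta>"
  proof -
    have "{0<..<1} \<inter> {..\<theta>} = {0<..\<theta>}"
      using assms(2) by auto
    then show ?thesis
      using assms(2) by (simp add: unif01_def divide_ennreal_def)
  qed
  finally show ?thesis
    using assms(2) by (simp add: measure_def)
qed


definition lam_quad :: "real \<Rightarrow> real" where
  "lam_quad y = 4 * y * (1 - y)"

lemma lam_quad_bounds: "0 \<le> y \<Longrightarrow> y \<le> 1 \<Longrightarrow> 0 \<le> lam_quad y \<and> lam_quad y \<le> 1"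
  using zero_le_power2[of "2 * y - 1"] mult_nonneg_nonneg[of y "1 - y"]
  by (auto simp: lam_quad_def power2_eq_square algebra_simps)

lemma lam_quad_admissible: "admissible_lambda lam_quad"
proof -
  have "c \<in> lam_quad ` {0..1}" if c: "c \<in> {0..1}" for c
  proof
    have "lam_quad ((1 - r) / 2) = 1 - r\<^sup>2" for r
      by (simp add: lam_quad_def power2_eq_square field_simps)
    then show "c = lam_quad ((1 - sqrt (1 - c)) / 2)"
      using c by simp
    have "(1 - r) / 2 \<in> {0..1}" if "0 \<le> r" "r \<le> 1" for r :: real
      using that by auto
    then show "(1 - sqrt (1 - c)) / 2 \<in> {0..1}"
      by this (use c in auto)
  qed
  then have "lam_quad ` {0..1} = {0..1}"
    using lam_quad_bounds by fastforce
  moreover have "concave_on {0..1} lam_quad"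
    unfolding concave_on_def
    by (rule convex_on_realI[where f'="\<lambda>x. 8*x - 4"])
       (auto simp: lam_quad_def intro!: derivative_eq_intros simp: algebra_simps)
  moreover have "lam_quad (1 - x) = lam_quad x" for x
    by (simp add: lam_quad_def algebra_simps)
  ultimately show ?thesis
    unfolding admissible_lambda_def by blast
qed

(* Averaging a [0,1]-valued variable with mean theta loses at least 4 (E|Z - theta|)^2 of length:
   E lam_quad(Z) = lam_quad(theta) - 4 E(Z - theta)^2 and E(Z - theta)^2 >= (E|Z - theta|)^2. *)
lemma (in prob_space) quadratic_length_gap:
  fixes Z :: "'a \<Rightarrow> real"
  assumes [measurable]: "Z \<in> borel_measurable M"
    and Z01: "\<And>\<omega>. \<omega> \<in> space M \<Longrightarrow> 0 \<le> Z \<omega> \<and> Z \<omega> \<le> 1"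
    and mean: "expectation Z = \<theta>"
  shows "expectation (\<lambda>\<omega>. lam_quad (Z \<omega>)) \<le> lam_quad \<theta> - 4 * (expectation (\<lambda>\<omega>. \<bar>Z \<omega> - \<theta>\<bar>))\<^sup>2"
proof -
  define B where "B = 1 + \<bar>\<theta>\<bar>"
  have dev: "\<bar>Z \<omega> - \<theta>\<bar> \<le> B" if "\<omega> \<in> space M" for \<omega>
    using Z01[OF that] by (auto simp: B_def)
  have dev2: "\<bar>(Z \<omega> - \<theta>)\<^sup>2\<bar> \<le> B\<^sup>2" if "\<omega> \<in> space M" for \<omega>
    using power_mono[OF dev[OF that] abs_ge_zero, of 2] by simp
  have int: "integrable M Z" "integrable M (\<lambda>\<omega>. \<bar>Z \<omega> - \<theta>\<bar>)" "integrable M (\<lambda>\<omega>. (Z \<omega> - \<theta>)\<^sup>2)"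
    by (rule integrable_const_bound[where B=1], auto intro!: AE_I2 dest: Z01)
       (rule integrable_const_bound[where B=B], auto intro!: AE_I2 dest: dev,
        rule integrable_const_bound[where B="B\<^sup>2"], auto intro!: AE_I2 dest: dev2)
  have pointwise: "lam_quad (Z \<omega>) = lam_quad \<theta> + 4 * (1 - 2 * \<theta>) * (Z \<omega> - \<theta>) - 4 * (Z \<omega> - \<theta>)\<^sup>2" for \<omega>
    by (simp add: lam_quad_def power2_eq_square algebra_simps)
  have "expectation (\<lambda>\<omega>. lam_quad (Z \<omega>)) = lam_quad \<theta> - 4 * expectation (\<lambda>\<omega>. (Z \<omega> - \<theta>)\<^sup>2)"
    unfolding pointwise using int mean by (simp add: prob_space)
  moreover have "(expectation (\<lambda>\<omega>. \<bar>Z \<omega> - \<theta>\<bar>))\<^sup>2 \<le> expectation (\<lambda>\<omega>. (Z \<omega> - \<theta>)\<^sup>2)"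
    using variance_eq[of "\<lambda>\<omega>. \<bar>Z \<omega> - \<theta>\<bar>"] variance_positive[of "\<lambda>\<omega>. \<bar>Z \<omega> - \<theta>\<bar>"] int
    by simp
  ultimately show ?thesis
    by simp
qed


(* The contraction generated by a rate function c: (0,1] \<rightarrow> (0,1/4]: with
   g(t) = sup_s c(s) max 0 (t - s), the map t \<mapsto> t - 4 g(t) is a contraction. *)

definition excess_majorant :: "(real \<Rightarrow> real) \<Rightarrow> real \<Rightarrow> real" where
  "excess_majorant c t = (SUP s\<in>{0<..1}. c s * max 0 (t - s))"

definition contraction_of :: "(real \<Rightarrow> real) \<Rightarrow> real \<Rightarrow> real" where
  "contraction_of c t = t - 4 * excess_majorant c t"

context
  fixes c :: "real \<Rightarrow> real"
  assumes rate: "\<And>s. s \<in> {0<..1} \<Longrightarrow> 0 < c s \<and> c s \<le> 1/4"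
begin

(* Each term of the supremum is at most max 0 t / 4, so the supremum exists. *)
lemma excess_term_le: "s \<in> {0<..1} \<Longrightarrow> c s * max 0 (t - s) \<le> max 0 t / 4"
  using mult_mono[of "c s" "1/4" "max 0 (t - s)" "max 0 t"] rate[of s] by auto

lemma excess_majorant_ge: "s \<in> {0<..1} \<Longrightarrow> c s * max 0 (t - s) \<le> excess_majorant c t"
  unfolding excess_majorant_def
  by (rule cSUP_upper) (auto intro!: bdd_aboveI2 excess_term_le)

lemma excess_majorant_le:
  "(\<And>s. s \<in> {0<..1} \<Longrightarrow> c s * max 0 (t - s) \<le> B) \<Longrightarrow> excess_majorant c t \<le> B"
  unfolding excess_majorant_def by (rule cSUP_least) auto

(* A supremum of convex functions of t is convex. *)
lemma excess_majorant_convex: "convex_on {0..1} (excess_majorant c)"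
proof (rule convex_onI)
  fix x y u :: real assume u: "0 < u" "u < 1"
  show "excess_majorant c ((1 - u) *\<^sub>R x + u *\<^sub>R y)
          \<le> (1 - u) * excess_majorant c x + u * excess_majorant c y"
  proof (rule excess_majorant_le)
    fix s :: real assume s: "s \<in> {0<..1}"
    have "(1 - u) * (x - s) \<le> (1 - u) * max 0 (x - s)" "u * (y - s) \<le> u * max 0 (y - s)"
      using u by (intro mult_left_mono; simp)+
    moreover have "0 \<le> (1 - u) * max 0 (x - s) + u * max 0 (y - s)"
      using u by simp
    ultimately have "max 0 ((1 - u) * x + u * y - s) \<le> (1 - u) * max 0 (x - s) + u * max 0 (y - s)"
      by (intro max.boundedI) (simp_all add: algebra_simps)
    then have "c s * max 0 ((1 - u) * x + u * y - s)
               \<le> c s * ((1 - u) * max 0 (x - s) + u * max 0 (y - s))"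
      using rate[OF s] by (intro mult_left_mono) auto
    also have "\<dots> = (1 - u) * (c s * max 0 (x - s)) + u * (c s * max 0 (y - s))"
      by (simp add: algebra_simps)
    also have "\<dots> \<le> (1 - u) * excess_majorant c x + u * excess_majorant c y"
      using u s by (intro add_mono mult_left_mono excess_majorant_ge) auto
    finally show "c s * max 0 ((1 - u) *\<^sub>R x + u *\<^sub>R y - s)
                  \<le> (1 - u) * excess_majorant c x + u * excess_majorant c y"
      by simp
  qed
qed simp

(* 0 <= g(t) <= t/4 keeps the map inside [0,1], g > 0 on (0,1] makes it strictly below the
   identity, and convexity of g makes it concave. *)
lemma contraction_of_rate: "contraction (contraction_of c)"
proof -
  have nonneg: "0 \<le> excess_majorant c t" for t
    using excess_majorant_ge[of 1 t] rate[of 1] by (auto intro: order_trans[rotated])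
  have quarter: "excess_majorant c t \<le> t / 4" if "0 \<le> t" for t
    using excess_term_le[of _ t] that by (intro excess_majorant_le) simp
  have pos: "0 < excess_majorant c t" if "0 < t" "t \<le> 1" for t
  proof -
    have "0 < c (t/2) * max 0 (t - t/2)"
      using rate[of "t/2"] that by auto
    also have "\<dots> \<le> excess_majorant c t"
      using that by (intro excess_majorant_ge) auto
    finally show ?thesis .
  qed
  have "concave_on {0..1} (contraction_of c)"
    unfolding concave_on_def
  proof (rule convex_onI)
    fix u x y :: real assume "0 < u" "u < 1" "x \<in> {0..1}" "y \<in> {0..1}"
    then have "excess_majorant c ((1 - u) *\<^sub>R x + u *\<^sub>R y)
               \<le> (1 - u) * excess_majorant c x + u * excess_majorant c y"
      by (intro convex_onD[OF excess_majorant_convex]) auto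
    then show "- contraction_of c ((1 - u) *\<^sub>R x + u *\<^sub>R y)
               \<le> (1 - u) * - contraction_of c x + u * - contraction_of c y"
      by (simp add: contraction_of_def algebra_simps)
  qed simp
  moreover have "0 \<le> contraction_of c x \<and> contraction_of c x \<le> 1" if "x \<in> {0..1}" for x
    using nonneg[of x] quarter[of x] that by (auto simp: contraction_of_def)
  moreover have "contraction_of c x < x" if "x \<in> {0<..1}" for x
    using pos[of x] that by (simp add: contraction_of_def)
  ultimately show ?thesis
    unfolding contraction_def by blast
qed

end


lemma bounded_set_integrable:
  fixes f :: "real \<Rightarrow> real"
  assumes "f \<in> borel_measurable borel" "\<And>x. x \<in> {0<..<1} \<Longrightarrow> \<bar>f x\<bar> \<le> B"
  shows "set_integrable lborel {0<..<1} f"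
  using integrableI_bounded_set_indicator[of "{0<..<1::real}" lborel f B] assms
  by (simp add: set_integrable_def)

lemma excess_mass_bound:
  fixes f g :: "real \<Rightarrow> real"
  assumes [measurable]: "f \<in> borel_measurable borel" "g \<in> borel_measurable borel"
    and f01: "\<And>x. x \<in> {0<..<1} \<Longrightarrow> 0 \<le> f x \<and> f x \<le> 1"
    and g01: "\<And>x. x \<in> {0<..<1} \<Longrightarrow> 0 \<le> g x \<and> g x \<le> 1"
    and "0 \<le> s" "0 \<le> c"
    and level: "\<And>x. x \<in> {0<..<1} \<Longrightarrow> s \<le> f x \<Longrightarrow> c \<le> g x"
  shows "c * ((\<integral>x\<in>{0<..<1}. f x \<partial>lborel) - s) \<le> (\<integral>x\<in>{0<..<1}. g x \<partial>lborel)"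
proof -
  define E where "E = {x. s \<le> f x}"
  have [measurable]: "E \<in> sets borel"
    unfolding E_def by measurable
  have int: "set_integrable lborel {0<..<1} f" "set_integrable lborel {0<..<1} g"
    "set_integrable lborel {0<..<1} (\<lambda>x. indicator E x :: real)"
    using f01 g01 by (intro bounded_set_integrable[where B=1]; force split: split_indicator)+
  have int_s: "set_integrable lborel {0<..<1} (\<lambda>x::real. s)"
    by (rule bounded_set_integrable[where B="\<bar>s\<bar>"]) simp_all
  have "f x \<le> s + indicator E x" if "x \<in> {0<..<1}" for x
    using f01[OF that] \<open>0 \<le> s\<close> by (auto simp: E_def split: split_indicator)
  then have "(\<integral>x\<in>{0<..<1}. f x \<partial>lborel) \<le> (\<integral>x\<in>{0<..<1}. s + indicator E x \<partial>lborel)"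
    using int int_s by (intro set_integral_mono) auto
  also have "\<dots> = s + (\<integral>x\<in>{0<..<1}. indicator E x \<partial>lborel)"
    using int int_s by (simp add: set_integral_const)
  finally have "c * ((\<integral>x\<in>{0<..<1}. f x \<partial>lborel) - s)
                \<le> (\<integral>x\<in>{0<..<1}. c * indicator E x \<partial>lborel)"
    using \<open>0 \<le> c\<close> by (simp add: mult_left_mono)
  also have "\<dots> \<le> (\<integral>x\<in>{0<..<1}. g x \<partial>lborel)"
    using int level g01 by (intro set_integral_mono) (auto simp: E_def split: split_indicator)
  finally show ?thesis .
qed

(* A family of right-continuous monotone functions that is measurable in the parameter is
   jointly measurable: approximate theta from the right along the grid ceiling(n theta)/n. *)
lemma right_continuous_family_measurable:
  fixes K :: "'a \<Rightarrow> real \<Rightarrow> real"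
  assumes mono: "\<And>\<phi>. mono (K \<phi>)" and right: "\<And>\<phi> t. continuous (at_right t) (K \<phi>)"
    and meas: "\<And>\<theta>. (\<lambda>\<phi>. K \<phi> \<theta>) \<in> borel_measurable M"
  shows "(\<lambda>(\<theta>, \<phi>). K \<phi> \<theta>) \<in> borel_measurable (borel \<Otimes>\<^sub>M M)"
proof -
  define grid where "grid n \<theta> = real_of_int \<lceil>real (Suc n) * \<theta>\<rceil> / real (Suc n)" for n \<theta>
  have grid_measurable: "(\<lambda>z. K (snd z) (grid n (fst z))) \<in> borel_measurable (borel \<Otimes>\<^sub>M M)" for n
    unfolding grid_def
    by (rule measurable_compose_countable'[where I=UNIV
          and f="\<lambda>i z. K (snd z) (real_of_int i / real (Suc n))" and g="\<lambda>z. \<lceil>real (Suc n) * fst z\<rceil>"])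
       (auto intro: measurable_compose[OF measurable_snd meas])
  have grid_bounds: "\<theta> \<le> grid n \<theta> \<and> grid n \<theta> \<le> \<theta> + 1 / real (Suc n)" for n \<theta>
  proof -
    have "real (Suc n) * \<theta> \<le> \<lceil>real (Suc n) * \<theta>\<rceil>" "\<lceil>real (Suc n) * \<theta>\<rceil> \<le> real (Suc n) * \<theta> + 1"
      by linarith+
    moreover have "(\<theta> + 1 / real (Suc n)) * real (Suc n) = real (Suc n) * \<theta> + 1"
      by (simp add: field_simps)
    ultimately show ?thesis
      unfolding grid_def by (simp add: pos_divide_le_eq pos_le_divide_eq mult.commute)
  qed
  have grid_limit: "(\<lambda>n. K \<phi> (grid n \<theta>)) \<longlonglongrightarrow> K \<phi> \<theta>" for \<theta> \<phi>
  proof -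
    have "(\<lambda>n. \<theta> + 1 / real (Suc n)) \<longlonglongrightarrow> \<theta>"
      using tendsto_add[OF tendsto_const LIMSEQ_inverse_real_of_nat, of \<theta>] by (simp add: inverse_eq_divide)
    then have "filterlim (\<lambda>n. \<theta> + 1 / real (Suc n)) (at_right \<theta>) sequentially"
      by (rule tendsto_imp_filterlim_at_right) simp
    moreover have "(K \<phi> \<longlongrightarrow> K \<phi> \<theta>) (at_right \<theta>)"
      using right[where \<phi>=\<phi> and t=\<theta>] by (simp add: continuous_within)
    ultimately have upper: "(\<lambda>n. K \<phi> (\<theta> + 1 / real (Suc n))) \<longlonglongrightarrow> K \<phi> \<theta>"
      by (rule filterlim_compose[rotated])
    show ?thesis
      by (rule tendsto_sandwich[OF _ _ tendsto_const upper])
         (use grid_bounds mono in \<open>auto simp: mono_def\<close>)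
  qed
  show ?thesis
    by (rule borel_measurable_LIMSEQ_real[where u="\<lambda>n z. K (snd z) (grid n (fst z))"])
       (simp_all add: case_prod_beta' grid_limit grid_measurable)
qed


(* Families K phi of c.d.f.s, indexed by phi distributed according to M, whose average is the
   uniform c.d.f. on (0,1) and which satisfy condition (A3). *)

locale mean_preserving_cdfs = prob_space M for M :: "real measure" +
  fixes K :: "real \<Rightarrow> real \<Rightarrow> real"
  assumes sets_M: "sets M = sets borel"
    and K_mono: "\<And>\<phi>. mono (K \<phi>)"
    and K_right: "\<And>\<phi> t. continuous (at_right t) (K \<phi>)"
    and K_bot: "\<And>\<phi>. (K \<phi> \<longlongrightarrow> 0) at_bot"
    and K_top: "\<And>\<phi>. (K \<phi> \<longlongrightarrow> 1) at_top"
    and K_measurable [measurable]: "\<And>\<theta>. (\<lambda>\<phi>. K \<phi> \<theta>) \<in> borel_measurable M"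
    and K_mean: "\<And>\<theta>. \<theta> \<in> {0<..<1} \<Longrightarrow> expectation (\<lambda>\<phi>. K \<phi> \<theta>) = \<theta>"
    and A3: "\<And>\<theta>. \<theta> \<in> {0<..<1} \<Longrightarrow> prob {\<phi>. K \<phi> \<theta> = \<theta>} < 1"
begin

lemma K_bounds: "0 \<le> K \<phi> t" "K \<phi> t \<le> 1"
  using mono_limits_bounds[OF K_mono K_bot K_top] by auto

lemma integrable_K:
  fixes f :: "real \<Rightarrow> real"
  assumes "f \<in> borel_measurable borel" "\<And>y. 0 \<le> y \<Longrightarrow> y \<le> 1 \<Longrightarrow> \<bar>f y\<bar> \<le> B"
  shows "integrable M (\<lambda>\<phi>. f (K \<phi> \<theta>))"
  by (rule integrable_const_bound[where B=B]) (use assms K_bounds in auto)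

lemma K_joint_measurable: "(\<lambda>(\<theta>, \<phi>). K \<phi> \<theta>) \<in> borel_measurable (borel \<Otimes>\<^sub>M M)"
  by (rule right_continuous_family_measurable[OF K_mono K_right K_measurable])

(* Joint measurability makes theta \<mapsto> E G(theta, K(Phi,theta)) measurable. *)
lemma expectation_K_measurable:
  fixes G :: "real \<Rightarrow> real \<Rightarrow> real"
  assumes "(\<lambda>(\<theta>, y). G \<theta> y) \<in> borel_measurable (borel \<Otimes>\<^sub>M borel)"
  shows "(\<lambda>\<theta>. expectation (\<lambda>\<phi>. G \<theta> (K \<phi> \<theta>))) \<in> borel_measurable borel"
proof -
  have "(\<lambda>z. (fst z, K (snd z) (fst z))) \<in> borel \<Otimes>\<^sub>M M \<rightarrow>\<^sub>M borel \<Otimes>\<^sub>M borel"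
    using K_joint_measurable by (simp add: case_prod_beta')
  from measurable_compose[OF this assms]
  have "(\<lambda>(\<theta>, \<phi>). G \<theta> (K \<phi> \<theta>)) \<in> borel_measurable (borel \<Otimes>\<^sub>M M)"
    by (simp add: case_prod_beta')
  then show ?thesis
    using borel_measurable_lebesgue_integral[where f="\<lambda>\<theta> \<phi>. G \<theta> (K \<phi> \<theta>)" and N=borel]
    by simp
qed

definition mean_deviation :: "real \<Rightarrow> real" where
  "mean_deviation \<theta> = expectation (\<lambda>\<phi>. \<bar>K \<phi> \<theta> - \<theta>\<bar>)"

lemma mean_deviation_measurable: "mean_deviation \<in> borel_measurable borel"
  unfolding mean_deviation_def by (rule expectation_K_measurable) measurable

lemma mean_deviation_bounds:
  assumes "\<theta> \<in> {0<..<1}"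
  shows "0 \<le> mean_deviation \<theta>" "mean_deviation \<theta> \<le> 1"
proof -
  show "0 \<le> mean_deviation \<theta>"
    unfolding mean_deviation_def by simp
  have "\<bar>K \<phi> \<theta> - \<theta>\<bar> \<le> 1" for \<phi>
    using K_bounds[of \<phi> \<theta>] assms by auto
  then have "mean_deviation \<theta> \<le> expectation (\<lambda>\<phi>. 1)"
    unfolding mean_deviation_def
    by (intro integral_mono integrable_K[where B=2]) (use assms in auto)
  then show "mean_deviation \<theta> \<le> 1"
    by (simp add: prob_space)
qed

(* Condition (A3) is exactly what makes D positive. *)
lemma mean_deviation_pos:
  assumes \<theta>: "\<theta> \<in> {0<..<1}"
  shows "0 < mean_deviation \<theta>"
proof (rule ccontr)
  assume "\<not> 0 < mean_deviation \<theta>"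
  then have "mean_deviation \<theta> = 0"
    using mean_deviation_bounds[OF \<theta>] by simp
  moreover have "integrable M (\<lambda>\<phi>. \<bar>K \<phi> \<theta> - \<theta>\<bar>)"
    by (rule integrable_K[where B=2]) (use \<theta> in auto)
  ultimately have "AE \<phi> in M. \<bar>K \<phi> \<theta> - \<theta>\<bar> = 0"
    unfolding mean_deviation_def by (subst (asm) integral_nonneg_eq_0_iff_AE) auto
  then have "AE \<phi> in M. \<phi> \<in> {\<phi>. K \<phi> \<theta> = \<theta>}"
    by simp
  moreover have "{\<phi> \<in> space M. K \<phi> \<theta> = \<theta>} \<in> sets M"
    by measurable
  then have "{\<phi>. K \<phi> \<theta> = \<theta>} \<in> sets M"
    using sets_eq_imp_space_eq[OF sets_M] by simp
  ultimately have "prob {\<phi>. K \<phi> \<theta> = \<theta>} = 1"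
    by (simp add: prob_eq_1)
  with A3[OF \<theta>] show False
    by simp
qed

(* Since E K(Phi,theta) = theta, D is twice the mean of the positive (or negative) part of
   K(Phi,theta) - theta; both parts move by at most b - a from a to b, so D is 2-Lipschitz. *)
lemma mean_deviation_positive_part:
  assumes "\<theta> \<in> {0<..<1}"
  shows "mean_deviation \<theta> = 2 * expectation (\<lambda>\<phi>. max (K \<phi> \<theta> - \<theta>) 0)"
    and "mean_deviation \<theta> = 2 * expectation (\<lambda>\<phi>. max (\<theta> - K \<phi> \<theta>) 0)"
proof -
  have int: "integrable M (\<lambda>\<phi>. K \<phi> \<theta>)" "integrable M (\<lambda>\<phi>. max (K \<phi> \<theta> - \<theta>) 0)"
    "integrable M (\<lambda>\<phi>. max (\<theta> - K \<phi> \<theta>) 0)"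
    by (intro integrable_K[where B=2]; use assms in auto)+
  have positive: "\<bar>K \<phi> \<theta> - \<theta>\<bar> = 2 * max (K \<phi> \<theta> - \<theta>) 0 - (K \<phi> \<theta> - \<theta>)"
    and negative: "\<bar>K \<phi> \<theta> - \<theta>\<bar> = 2 * max (\<theta> - K \<phi> \<theta>) 0 + (K \<phi> \<theta> - \<theta>)" for \<phi>
    by (auto split: abs_split split_max)
  show "mean_deviation \<theta> = 2 * expectation (\<lambda>\<phi>. max (K \<phi> \<theta> - \<theta>) 0)"
    unfolding mean_deviation_def positive using int K_mean[OF assms] by (simp add: prob_space)
  show "mean_deviation \<theta> = 2 * expectation (\<lambda>\<phi>. max (\<theta> - K \<phi> \<theta>) 0)"
    unfolding mean_deviation_def negative using int K_mean[OF assms] by (simp add: prob_space)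
qed

lemma mean_deviation_increment:
  assumes a: "a \<in> {0<..<1}" and b: "b \<in> {0<..<1}" and "a \<le> b"
  shows "mean_deviation a - mean_deviation b \<le> 2 * (b - a)"
    and "mean_deviation b - mean_deviation a \<le> 2 * (b - a)"
proof -
  have int: "integrable M (\<lambda>\<phi>. max (K \<phi> t - u) 0)" "integrable M (\<lambda>\<phi>. max (u - K \<phi> t) 0)" for t u
    by (intro integrable_K[where B="1 + \<bar>u\<bar>"]; auto)+
  have Kab: "K \<phi> a \<le> K \<phi> b" for \<phi>
    using K_mono \<open>a \<le> b\<close> by (simp add: mono_def)
  have "max (K \<phi> a - a) 0 - (b - a) \<le> max (K \<phi> b - b) 0"
    and "max (b - K \<phi> b) 0 - (b - a) \<le> max (a - K \<phi> a) 0" for \<phi>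
    using Kab[of \<phi>] \<open>a \<le> b\<close> by (auto split: split_max)
  then have positive: "expectation (\<lambda>\<phi>. max (K \<phi> a - a) 0 - (b - a)) \<le> expectation (\<lambda>\<phi>. max (K \<phi> b - b) 0)"
    and negative: "expectation (\<lambda>\<phi>. max (b - K \<phi> b) 0 - (b - a)) \<le> expectation (\<lambda>\<phi>. max (a - K \<phi> a) 0)"
    using int by (intro integral_mono; simp)+
  show "mean_deviation a - mean_deviation b \<le> 2 * (b - a)"
    using positive int mean_deviation_positive_part(1)[OF a] mean_deviation_positive_part(1)[OF b]
    by (simp add: prob_space)
  show "mean_deviation b - mean_deviation a \<le> 2 * (b - a)"
    using negative int mean_deviation_positive_part(2)[OF a] mean_deviation_positive_part(2)[OF b]
    by (simp add: prob_space)
qed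

lemma mean_deviation_lipschitz: "2-lipschitz_on {0<..<1} mean_deviation"
proof (rule lipschitz_onI)
  fix x y :: real assume "x \<in> {0<..<1}" "y \<in> {0<..<1}"
  then show "dist (mean_deviation x) (mean_deviation y) \<le> 2 * dist x y"
    using mean_deviation_increment[of x y] mean_deviation_increment[of y x]
    by (cases "x \<le> y") (auto simp: dist_real_def abs_le_iff)
qed simp

(* On the compact level set {lam_quad >= s} inside (0,1) the continuous positive function D^2
   is bounded below by a positive constant. *)
lemma level_rate_exists:
  assumes s: "s \<in> {0<..1}"
  shows "\<exists>c>0. c \<le> 1/4 \<and> (\<forall>\<theta>\<in>{0<..<1}. s \<le> lam_quad \<theta> \<longrightarrow> c \<le> (mean_deviation \<theta>)\<^sup>2)"
proof -
  define S where "S = {0..1} \<inter> {\<theta>::real. s \<le> lam_quad \<theta>}"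
  have "compact S"
    unfolding S_def lam_quad_def by (intro compact_Int_closed compact_Icc closed_Collect_le continuous_intros)
  have S_inside: "S \<subseteq> {0<..<1}"
  proof
    fix \<theta> assume "\<theta> \<in> S"
    then have "0 \<le> \<theta>" "\<theta> \<le> 1" "s \<le> lam_quad \<theta>"
      by (auto simp: S_def)
    then show "\<theta> \<in> {0<..<1}"
      using s by (cases "\<theta> = 0"; cases "\<theta> = 1") (auto simp: lam_quad_def)
  qed
  have "1/2 \<in> S"
    using s by (auto simp: S_def lam_quad_def)
  moreover have "continuous_on S (\<lambda>\<theta>. (mean_deviation \<theta>)\<^sup>2)"
    using lipschitz_on_continuous_on[OF mean_deviation_lipschitz] S_inside
    by (intro continuous_intros) (rule continuous_on_subset)
  ultimately obtain m where m: "m \<in> S" "\<And>y. y \<in> S \<Longrightarrow> (mean_deviation m)\<^sup>2 \<le> (mean_deviation y)\<^sup>2"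
    using continuous_attains_inf[OF \<open>compact S\<close>] by blast
  have "0 < mean_deviation m"
    using mean_deviation_pos m(1) S_inside by auto
  then show ?thesis
    using m S_inside
    by (intro exI[of _ "min (1/4) ((mean_deviation m)\<^sup>2)"]) (auto simp: S_def min.coboundedI2)
qed

definition level_rate :: "real \<Rightarrow> real" where
  "level_rate s = (SOME c. c > 0 \<and> c \<le> 1/4 \<and>
     (\<forall>\<theta>\<in>{0<..<1}. s \<le> lam_quad \<theta> \<longrightarrow> c \<le> (mean_deviation \<theta>)\<^sup>2))"

lemma level_rate:
  assumes "s \<in> {0<..1}"
  shows "0 < level_rate s" "level_rate s \<le> 1/4"
    "\<And>\<theta>. \<theta> \<in> {0<..<1} \<Longrightarrow> s \<le> lam_quad \<theta> \<Longrightarrow> level_rate s \<le> (mean_deviation \<theta>)\<^sup>2"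
  using someI_ex[OF level_rate_exists[OF assms]] unfolding level_rate_def[symmetric] by auto

lemma expected_length_exchange:
  fixes u :: "real \<Rightarrow> real"
  assumes u [measurable]: "u \<in> borel_measurable borel"
  shows "(\<integral>\<phi>. (\<integral>x\<in>{0<..<1}. lam_quad (K \<phi> (u x)) \<partial>lborel) \<partial>M)
           = (\<integral>x\<in>{0<..<1}. expectation (\<lambda>\<phi>. lam_quad (K \<phi> (u x))) \<partial>lborel)"
proof -
  define A where "A = {0<..<1::real}"
  define F where "F x \<phi> = indicator A x * lam_quad (K \<phi> (u x))" for x \<phi>
  interpret P: pair_sigma_finite lborel M
    by (intro pair_sigma_finite.intro lborel.sigma_finite_measure_axioms sigma_finite_measure_axioms)
  have "(\<lambda>z. (u (fst z), snd z)) \<in> lborel \<Otimes>\<^sub>M M \<rightarrow>\<^sub>M borel \<Otimes>\<^sub>M M"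
    by measurable
  from measurable_compose[OF this K_joint_measurable]
  have "(\<lambda>z. K (snd z) (u (fst z))) \<in> borel_measurable (lborel \<Otimes>\<^sub>M M)"
    by simp
  then have F_measurable: "(\<lambda>(x, \<phi>). F x \<phi>) \<in> borel_measurable (lborel \<Otimes>\<^sub>M M)"
    unfolding F_def lam_quad_def A_def by (simp add: case_prod_beta') measurable
  have "integrable (lborel \<Otimes>\<^sub>M M) (\<lambda>(x, \<phi>). F x \<phi>)"
  proof (rule integrableI_bounded_set[where A="A \<times> space M" and B=1, OF _ F_measurable])
    show "emeasure (lborel \<Otimes>\<^sub>M M) (A \<times> space M) < \<infinity>"
      by (simp add: A_def emeasure_pair_measure_Times emeasure_space_1)
    show "AE z in lborel \<Otimes>\<^sub>M M. z \<in> A \<times> space M \<longrightarrow> norm (case z of (x, \<phi>) \<Rightarrow> F x \<phi>) \<le> 1"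
      using lam_quad_bounds K_bounds by (auto simp: F_def)
    show "AE z in lborel \<Otimes>\<^sub>M M. z \<notin> A \<times> space M \<longrightarrow> (case z of (x, \<phi>) \<Rightarrow> F x \<phi>) = 0"
      using sets_eq_imp_space_eq[OF sets_M] by (intro AE_I2) (auto simp: F_def indicator_def)
  qed (simp add: A_def)
  from P.Fubini_integral[OF this]
  show ?thesis
    unfolding set_lebesgue_integral_def A_def[symmetric] F_def by simp
qed

lemma path_length_deviation:
  fixes u :: "real \<Rightarrow> real"
  assumes u [measurable]: "u \<in> borel_measurable borel" and u01: "\<And>x. u x \<in> {0<..<1}"
  shows "(\<lambda>x. lam_quad (u x)) \<in> borel_measurable borel"
    and "(\<lambda>x. (mean_deviation (u x))\<^sup>2) \<in> borel_measurable borel"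
    and "0 \<le> lam_quad (u x) \<and> lam_quad (u x) \<le> 1"
    and "0 \<le> (mean_deviation (u x))\<^sup>2 \<and> (mean_deviation (u x))\<^sup>2 \<le> 1"
proof -
  show "(\<lambda>x. lam_quad (u x)) \<in> borel_measurable borel"
    unfolding lam_quad_def by measurable
  show "(\<lambda>x. (mean_deviation (u x))\<^sup>2) \<in> borel_measurable borel"
    using mean_deviation_measurable by measurable
  show "0 \<le> lam_quad (u x) \<and> lam_quad (u x) \<le> 1"
    using u01[of x] by (intro lam_quad_bounds) auto
  show "0 \<le> (mean_deviation (u x))\<^sup>2 \<and> (mean_deviation (u x))\<^sup>2 \<le> 1"
    using mean_deviation_bounds[OF u01[of x]] by (simp add: power_le_one)
qed

lemma expected_length_gap:
  fixes u :: "real \<Rightarrow> real"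
  assumes u [measurable]: "u \<in> borel_measurable borel" and u01: "\<And>x. u x \<in> {0<..<1}"
  shows "(\<integral>\<phi>. (\<integral>x\<in>{0<..<1}. lam_quad (K \<phi> (u x)) \<partial>lborel) \<partial>M)
           \<le> (\<integral>x\<in>{0<..<1}. lam_quad (u x) \<partial>lborel) - 4 * (\<integral>x\<in>{0<..<1}. (mean_deviation (u x))\<^sup>2 \<partial>lborel)"
proof -
  have expectation_measurable: "(\<lambda>x. expectation (\<lambda>\<phi>. lam_quad (K \<phi> (u x)))) \<in> borel_measurable borel"
    using expectation_K_measurable[of "\<lambda>\<theta> y. lam_quad y"] unfolding lam_quad_def by measurable
  have expectation_01: "0 \<le> expectation (\<lambda>\<phi>. lam_quad (K \<phi> (u x)))
      \<and> expectation (\<lambda>\<phi>. lam_quad (K \<phi> (u x))) \<le> 1" for x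
  proof -
    have "0 \<le> lam_quad (K \<phi> (u x)) \<and> lam_quad (K \<phi> (u x)) \<le> 1" for \<phi>
      using K_bounds by (intro lam_quad_bounds)
    moreover have "integrable M (\<lambda>\<phi>. lam_quad (K \<phi> (u x)))"
      by (rule integrable_K[where B=1]) (auto simp: lam_quad_def dest: lam_quad_bounds)
    ultimately show ?thesis
      by (auto intro!: integral_nonneg integral_le_const)
  qed
  note path = path_length_deviation[OF u u01]
  have int_expectation: "set_integrable lborel {0<..<1} (\<lambda>x. expectation (\<lambda>\<phi>. lam_quad (K \<phi> (u x))))"
    by (rule bounded_set_integrable[where B=1, OF expectation_measurable]) (use expectation_01 in auto)
  have int_length: "set_integrable lborel {0<..<1} (\<lambda>x. lam_quad (u x))"
    by (rule bounded_set_integrable[where B=1, OF path(1)]) (use path(3) in auto)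
  have int_deviation: "set_integrable lborel {0<..<1} (\<lambda>x. (mean_deviation (u x))\<^sup>2)"
    by (rule bounded_set_integrable[where B=1, OF path(2)]) (use path(4) in auto)
  note int = int_expectation int_length int_deviation
  have gap: "expectation (\<lambda>\<phi>. lam_quad (K \<phi> (u x))) \<le> lam_quad (u x) - 4 * (mean_deviation (u x))\<^sup>2" for x
    unfolding mean_deviation_def
    by (rule quadratic_length_gap) (use K_bounds K_mean[OF u01[of x]] in auto)
  have "(\<integral>\<phi>. (\<integral>x\<in>{0<..<1}. lam_quad (K \<phi> (u x)) \<partial>lborel) \<partial>M)
        = (\<integral>x\<in>{0<..<1}. expectation (\<lambda>\<phi>. lam_quad (K \<phi> (u x))) \<partial>lborel)"
    by (rule expected_length_exchange[OF u])
  also have "\<dots> \<le> (\<integral>x\<in>{0<..<1}. lam_quad (u x) - 4 * (mean_deviation (u x))\<^sup>2 \<partial>lborel)"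
    using int gap by (intro set_integral_mono) auto
  also have "\<dots> = (\<integral>x\<in>{0<..<1}. lam_quad (u x) \<partial>lborel) - 4 * (\<integral>x\<in>{0<..<1}. (mean_deviation (u x))\<^sup>2 \<partial>lborel)"
    using int by simp
  finally show ?thesis .
qed

(* The total squared deviation along u dominates the excess majorant of the length of u:
   D(u)^2 >= level_rate s wherever lam_quad(u) >= s. *)
lemma deviation_mass_bound:
  fixes u :: "real \<Rightarrow> real"
  assumes u [measurable]: "u \<in> borel_measurable borel" and u01: "\<And>x. u x \<in> {0<..<1}"
  shows "excess_majorant level_rate (\<integral>x\<in>{0<..<1}. lam_quad (u x) \<partial>lborel)
           \<le> (\<integral>x\<in>{0<..<1}. (mean_deviation (u x))\<^sup>2 \<partial>lborel)"
proof (rule excess_majorant_le)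
  show "\<And>s. s \<in> {0<..1} \<Longrightarrow> 0 < level_rate s \<and> level_rate s \<le> 1/4"
    using level_rate by auto
  note path = path_length_deviation[OF u u01]
  fix s :: real assume s: "s \<in> {0<..1}"
  have "0 \<le> (\<integral>x\<in>{0<..<1}. (mean_deviation (u x))\<^sup>2 \<partial>lborel)"
    unfolding set_lebesgue_integral_def by (intro Bochner_Integration.integral_nonneg) simp
  moreover have "level_rate s * ((\<integral>x\<in>{0<..<1}. lam_quad (u x) \<partial>lborel) - s)
                 \<le> (\<integral>x\<in>{0<..<1}. (mean_deviation (u x))\<^sup>2 \<partial>lborel)"
  proof (rule excess_mass_bound[OF path(1,2)])
    show "0 \<le> s" "0 \<le> level_rate s"
      using s level_rate(1)[OF s] by auto
    show "level_rate s \<le> (mean_deviation (u x))\<^sup>2" if "x \<in> {0<..<1}" "s \<le> lam_quad (u x)" for x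
      using that level_rate(3)[OF s u01[of x]] by simp
  qed (use path(3,4) in auto)
  ultimately show "level_rate s * max 0 ((\<integral>x\<in>{0<..<1}. lam_quad (u x) \<partial>lborel) - s)
                   \<le> (\<integral>x\<in>{0<..<1}. (mean_deviation (u x))\<^sup>2 \<partial>lborel)"
    by (simp add: max_def)
qed

lemma length_contraction_measurable:
  fixes u :: "real \<Rightarrow> real"
  assumes "u \<in> borel_measurable borel" "\<And>x. u x \<in> {0<..<1}"
  shows "(\<integral>\<phi>. (\<integral>x\<in>{0<..<1}. lam_quad (K \<phi> (u x)) \<partial>lborel) \<partial>M)
           \<le> contraction_of level_rate (\<integral>x\<in>{0<..<1}. lam_quad (u x) \<partial>lborel)"
  using expected_length_gap[OF assms] deviation_mass_bound[OF assms]
  unfolding contraction_of_def by linarith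

(* Paths in F_c need only be monotone on (0,1); extending them by 1/2 outside (0,1) makes them
   Borel measurable without changing any length integral. *)
lemma length_contraction:
  assumes h: "h \<in> Fc"
  shows "(\<integral>\<phi>. psi lam_quad (K \<phi> \<circ> h) \<partial>M) \<le> contraction_of level_rate (psi lam_quad h)"
proof -
  define A where "A = {0<..<1::real}"
  define u where "u x = (if x \<in> A then h x else 1/2)" for x
  have "mono_on A h" and hA: "\<And>x. x \<in> A \<Longrightarrow> h x \<in> A"
    using h unfolding Fc_def A_def by (auto simp: image_subset_iff)
  then have "u \<in> borel_measurable borel"
    using borel_measurable_mono_on_fnc
      measurable_restrict_space_iff[where \<Omega>=A and M=borel and N="borel::real measure" and c="1/2" and f=h]
    unfolding u_def A_def by simp
  moreover have "u x \<in> A" for x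
    using hA by (auto simp: u_def A_def)
  moreover have psi_u: "psi lam_quad (g \<circ> h) = (\<integral>x\<in>A. lam_quad (g (u x)) \<partial>lborel)" for g
    unfolding psi_def A_def u_def by (intro set_lebesgue_integral_cong) auto
  moreover have "psi lam_quad h = (\<integral>x\<in>A. lam_quad (u x) \<partial>lborel)"
    using psi_u[of id] by simp
  ultimately show ?thesis
    using length_contraction_measurable[of u] unfolding A_def by (simp only: psi_u)
qed

end


(* The conditional c.d.f. of a normalized channel satisfying (A3) is a mean-preserving family:
   averaging F_{Theta|Phi}(theta|Phi) over Phi recovers the uniform c.d.f. of Theta. *)

lemma normalized_channel_mean_preserving:
  assumes pair: "input_channel_pair PX W" and cdf: "is_cond_cdf PX W K" and "condA3 PX W K"
  shows "mean_preserving_cdfs (phi_law PX W) K"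
proof -
  note law = phi_law_distribution[OF pair]
  have joint: "\<And>\<theta> B. B \<in> sets borel \<Longrightarrow> measure (theta_phi_law PX W) {z. fst z \<le> \<theta> \<and> snd z \<in> B}
      = (\<integral>\<phi>\<in>B. K \<phi> \<theta> \<partial>phi_law PX W)"
    using cdf unfolding is_cond_cdf_def by blast
  have expectation: "(\<integral>\<phi>. K \<phi> \<theta> \<partial>phi_law PX W) = \<theta>" if \<theta>: "\<theta> \<in> {0<..<1}" for \<theta>
    using joint[of UNIV \<theta>] theta_marginal_uniform[OF pair \<theta>]
    by (simp add: set_lebesgue_integral_def)
  show ?thesis
  proof (intro mean_preserving_cdfs.intro mean_preserving_cdfs_axioms.intro)
    show "prob_space (phi_law PX W)" "sets (phi_law PX W) = sets borel"
      by (fact law)+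
    show "\<And>\<phi>. mono (K \<phi>)" "\<And>\<phi> t. continuous (at_right t) (K \<phi>)"
      "\<And>\<phi>. (K \<phi> \<longlongrightarrow> 0) at_bot" "\<And>\<phi>. (K \<phi> \<longlongrightarrow> 1) at_top"
      using cdf unfolding is_cond_cdf_def by blast+
    show "\<And>\<theta>. (\<lambda>\<phi>. K \<phi> \<theta>) \<in> borel_measurable (phi_law PX W)"
      using cdf measurable_cong_sets[OF law(2) refl] unfolding is_cond_cdf_def by blast
    show "\<And>\<theta>. \<theta> \<in> {0<..<1} \<Longrightarrow> (\<integral>\<phi>. K \<phi> \<theta> \<partial>phi_law PX W) = \<theta>"
      by (fact expectation)
    show "\<And>\<theta>. \<theta> \<in> {0<..<1} \<Longrightarrow> measure (phi_law PX W) {\<phi>. K \<phi> \<theta> = \<theta>} < 1"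
      using \<open>condA3 PX W K\<close> unfolding condA3_def by blast
  qed
qed

theorem mainTheorem14:
  fixes PX :: "real measure" and W :: "real \<Rightarrow> real measure"
    and K :: "real \<Rightarrow> real \<Rightarrow> real"
  assumes "input_channel_pair PX W"
    and "finite_mutual_info PX W"
    and "is_cond_cdf PX W K"
    and "condA3 PX W K"
  shows "\<exists>\<xi> lam. contraction \<xi> \<and> admissible_lambda lam \<and>
           (\<forall>h\<in>Fc. (\<integral>\<phi>. psi lam (K \<phi> \<circ> h) \<partial>phi_law PX W) \<le> \<xi> (psi lam h))"
proof -
  interpret mean_preserving_cdfs "phi_law PX W" K
    using assms(1,3,4) by (rule normalized_channel_mean_preserving)
  have "contraction (contraction_of level_rate)"
    by (rule contraction_of_rate) (use level_rate in auto)
  then show ?thesis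
    using lam_quad_admissible length_contraction by blast
qed

end
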